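(* For every nonnegative integer $p$ and every $k\in\mathbb{Z}$, the generalized energy operators $[[\cdot]^p]_k^{+}$ and $[[\cdot]^p]_k^{-}$ are bilinear and satisfy the derivative chain rule property: for every $f\in\mathbf{S}^-(\mathbb{R})$, writing $g=[[f]^{p-1}]_k^{\pm}$ (with $g=f$ when $p=0$), so that $[[f]^p]_k^{\pm}=[g,g]_k^{\pm}$, $$\partial_t[g,g]_k^{\pm}=[g,g]_{k+1}^{\pm}+[\partial_t g,\partial_t g]_{k-1}^{\pm},$$ which the paper writes as $\partial_t[[f]^p]_k^{\pm}=[[f]^p]_{k+1}^{\pm}+[\partial_t[f]^p]_{k-1}^{\pm}$.
   Context: $\mathbf{S}^{-}(\mathbb{R})=\{f\in C^\infty(\mathbb{R}) : \sup_{t<0}|t|^k|\partial_t^j f(t)|<\infty \text{ for all } k,j\ge 0\}$. For $k\in\mathbb{Z}$, $\partial_t^k$ is the $k$-th derivative when $k\ge0$ and the $|k|$-fold iterated antiderivative $\int_{-\infty}^t$ when $k<0$. For $k\in\mathbb{Z}$, $[g,h]_k^{\pm}=\partial_t g\,\partial_t^{k-1}h\pm g\,\partial_t^k h$. The energy operators are $\Psi_k^{\pm}(f)=[f,f]_k^{\pm}=:[[f]^0]_k^{\pm}$, and the generalized energy operators are defined recursively by $[[f]^{p+1}]_k^{\pm}=\big[[[f]^{p}]_k^{\pm},[[f]^{p}]_k^{\pm}\big]_k^{\pm}$. Bilinearity is in the sense used by the paper: a map $B:\mathbf{V}\times\mathbf{V}\to\mathbf{S}^-(\mathbb{R})$ ($\mathbf{V}\subseteq\mathbf{S}^-(\mathbb{R})$)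 is bilinear if $B(v_1+v_2,w)=B(v_1,w)+B(v_2,w)$, $B(v,w_1+w_2)=B(v,w_1)+B(v,w_2)$ and $B(cv,w)=B(v,cw)=cB(v,w)$ for $c\in\mathbb{R}$; an operator of the form $f\mapsto B(f,f)$ built from such brackets (as $\Psi_k^{\pm}$ is from $[\cdot,\cdot]_k^{\pm}$) is called bilinear. *)

theory Defs
  imports "HOL-Analysis.Analysis"
begin

definition smooth_fun :: "(real \<Rightarrow> real) \<Rightarrow> bool" where
  "smooth_fun f \<longleftrightarrow> (\<forall>j x. ((deriv ^^ j) f) differentiable (at x))"

definition Sminus :: "(real \<Rightarrow> real) set" where
  "Sminus = {f. smooth_fun f \<and>
     (\<forall>k j::nat. \<exists>C. \<forall>t<0. \<bar>t\<bar> ^ k * \<bar>((deriv ^^ j) f) t\<bar> \<le> C)}"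

definition antideriv :: "(real \<Rightarrow> real) \<Rightarrow> (real \<Rightarrow> real)" where
  "antideriv f = (\<lambda>t. integral {..t} f)"

definition dk :: "int \<Rightarrow> (real \<Rightarrow> real) \<Rightarrow> (real \<Rightarrow> real)" where
  "dk k f = (if 0 \<le> k then (deriv ^^ nat k) f else (antideriv ^^ nat (- k)) f)"

text \<open>The bracket [g,h]_k with sign s (s = 1 for +, s = -1 for -).\<close>
definition bracket :: "int \<Rightarrow> real \<Rightarrow> (real \<Rightarrow> real) \<Rightarrow> (real \<Rightarrow> real) \<Rightarrow> (real \<Rightarrow> real)" where
  "bracket k s g h = (\<lambda>t. deriv g t * dk (k - 1) h t + s * (g t * dk k h t))"

fun gen :: "nat \<Rightarrow> int \<Rightarrow> real \<Rightarrow> (real \<Rightarrow> real) \<Rightarrow> (real \<Rightarrow> real)" where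
  "gen 0 k s f = bracket k s f f"
| "gen (Suc p) k s f = bracket k s (gen p k s f) (gen p k s f)"

definition bilinear_on :: "(real \<Rightarrow> real) set \<Rightarrow> ((real \<Rightarrow> real) \<Rightarrow> (real \<Rightarrow> real) \<Rightarrow> (real \<Rightarrow> real)) \<Rightarrow> bool" where
  "bilinear_on V B \<longleftrightarrow>
     (\<forall>v\<in>V. \<forall>w\<in>V. B v w \<in> Sminus) \<and>
     (\<forall>v1\<in>V. \<forall>v2\<in>V. \<forall>w\<in>V. B (\<lambda>t. v1 t + v2 t) w = (\<lambda>t. B v1 w t + B v2 w t)) \<and>
     (\<forall>v\<in>V. \<forall>w1\<in>V. \<forall>w2\<in>V. B v (\<lambda>t. w1 t + w2 t) = (\<lambda>t. B v w1 t + B v w2 t)) \<and>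
     (\<forall>v\<in>V. \<forall>w\<in>V. \<forall>c::real. B (\<lambda>t. c * v t) w = (\<lambda>t. c * B v w t) \<and>
                                B v (\<lambda>t. c * w t) = (\<lambda>t. c * B v w t))"

end

theory Submission
  imports Defs
begin

text \<open>Everything reduces to two facts about \<open>S\<^sup>-(\<real>)\<close>: it is a vector space closed under
  products, differentiation and the antiderivative \<open>\<integral>\<^bsub>-\<infinity>\<^esub>\<^sup>t\<close>, and on it differentiation and
  antidifferentiation are mutually inverse linear maps, so that \<open>\<partial>\<^sub>t \<circ> \<partial>\<^sub>t\<^sup>k = \<partial>\<^sub>t\<^sup>k \<circ> \<partial>\<^sub>t = \<partial>\<^sub>t\<^sup>k\<^sup>+\<^sup>1\<close>
  for every integer \<open>k\<close>. Bilinearity of \<open>[\<cdot>,\<cdot>]\<^sub>k\<close> is then linearity of \<open>\<partial>\<^sub>t\<^sup>k\<close>, and the chain rule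
  is the product rule applied to the two products in \<open>[g,g]\<^sub>k\<close>, regrouped.\<close>

definition rapid_decay :: "(real \<Rightarrow> real) \<Rightarrow> bool" where
  "rapid_decay h \<longleftrightarrow> (\<forall>k::nat. \<exists>C. \<forall>t<0. \<bar>t\<bar> ^ k * \<bar>h t\<bar> \<le> C)"

lemma rapid_decay_add: "rapid_decay f \<Longrightarrow> rapid_decay g \<Longrightarrow> rapid_decay (\<lambda>t. f t + g t)"
  unfolding rapid_decay_def
proof
  fix k assume f: "\<forall>k. \<exists>C. \<forall>t<0. \<bar>t\<bar> ^ k * \<bar>f t\<bar> \<le> C" and g: "\<forall>k. \<exists>C. \<forall>t<0. \<bar>t\<bar> ^ k * \<bar>g t\<bar> \<le> C"
  obtain A where A: "\<forall>t<0. \<bar>t\<bar> ^ k * \<bar>f t\<bar> \<le> A" using f by blast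
  obtain B where B: "\<forall>t<0. \<bar>t\<bar> ^ k * \<bar>g t\<bar> \<le> B" using g by blast
  have "\<bar>t\<bar> ^ k * \<bar>f t + g t\<bar> \<le> A + B" if "t < 0" for t
  proof -
    have "\<bar>t\<bar> ^ k * \<bar>f t + g t\<bar> \<le> \<bar>t\<bar> ^ k * \<bar>f t\<bar> + \<bar>t\<bar> ^ k * \<bar>g t\<bar>"
      by (simp add: abs_triangle_ineq mult_left_mono flip: distrib_left)
    also have "\<dots> \<le> A + B" using A B that by (simp add: add_mono)
    finally show ?thesis .
  qed
  then show "\<exists>C. \<forall>t<0. \<bar>t\<bar> ^ k * \<bar>f t + g t\<bar> \<le> C" by blast
qed

lemma rapid_decay_cmult: "rapid_decay f \<Longrightarrow> rapid_decay (\<lambda>t. c * f t)"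
  unfolding rapid_decay_def
proof
  fix k assume "\<forall>k. \<exists>C. \<forall>t<0. \<bar>t\<bar> ^ k * \<bar>f t\<bar> \<le> C"
  then obtain A where A: "\<forall>t<0. \<bar>t\<bar> ^ k * \<bar>f t\<bar> \<le> A" by blast
  have "\<bar>t\<bar> ^ k * \<bar>c * f t\<bar> \<le> \<bar>c\<bar> * A" if "t < 0" for t
  proof -
    have "\<bar>t\<bar> ^ k * \<bar>c * f t\<bar> = \<bar>c\<bar> * (\<bar>t\<bar> ^ k * \<bar>f t\<bar>)" by (simp add: abs_mult)
    also have "\<dots> \<le> \<bar>c\<bar> * A" using A that by (intro mult_left_mono) auto
    finally show ?thesis .
  qed
  then show "\<exists>C. \<forall>t<0. \<bar>t\<bar> ^ k * \<bar>c * f t\<bar> \<le> C" by blast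
qed

lemma rapid_decay_mult: "rapid_decay f \<Longrightarrow> rapid_decay g \<Longrightarrow> rapid_decay (\<lambda>t. f t * g t)"
  unfolding rapid_decay_def
proof
  fix k assume f: "\<forall>k. \<exists>C. \<forall>t<0. \<bar>t\<bar> ^ k * \<bar>f t\<bar> \<le> C" and g: "\<forall>k. \<exists>C. \<forall>t<0. \<bar>t\<bar> ^ k * \<bar>g t\<bar> \<le> C"
  obtain A where A: "\<forall>t<0. \<bar>t\<bar> ^ k * \<bar>f t\<bar> \<le> A" using f by blast
  obtain B where B: "\<forall>t<0. \<bar>t\<bar> ^ 0 * \<bar>g t\<bar> \<le> B" using g by blast
  have "\<bar>t\<bar> ^ k * \<bar>f t * g t\<bar> \<le> A * B" if "t < 0" for t
  proof -
    have fA: "\<bar>t\<bar> ^ k * \<bar>f t\<bar> \<le> A" using A that by blast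
    have "\<bar>t\<bar> ^ k * \<bar>f t * g t\<bar> = (\<bar>t\<bar> ^ k * \<bar>f t\<bar>) * \<bar>g t\<bar>" by (simp add: abs_mult)
    also have "\<dots> \<le> A * B"
      using fA B that by (intro mult_mono) (auto intro: order_trans[OF _ fA])
    finally show ?thesis .
  qed
  then show "\<exists>C. \<forall>t<0. \<bar>t\<bar> ^ k * \<bar>f t * g t\<bar> \<le> C" by blast
qed

lemma rapid_decay_const_imp_zero:
  assumes "rapid_decay (\<lambda>_. c)"
  shows "c = 0"
proof (rule ccontr)
  assume c: "c \<noteq> 0"
  obtain C where C: "\<forall>t<0. \<bar>t\<bar> ^ 1 * \<bar>c\<bar> \<le> C" using assms unfolding rapid_decay_def by blast
  define t where "t = - (\<bar>C\<bar> + 1) / \<bar>c\<bar>"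
  have "t < 0" unfolding t_def using c by (intro divide_neg_pos) auto
  then have "\<bar>t\<bar> * \<bar>c\<bar> \<le> C" using C by auto
  moreover have "\<bar>t\<bar> * \<bar>c\<bar> = \<bar>C\<bar> + 1" using c by (simp add: t_def)
  ultimately show False by linarith
qed

lemma inverse_square_absolutely_integrable_on_atMost:
  "(\<lambda>x::real. 1 / x^2) absolutely_integrable_on {..-1}"
proof -
  have "(\<lambda>x::real. 1 / x^2) integrable_on {1..}"
    using has_integral_inverse_power_to_inf[of 2 1] by (auto simp: integrable_on_def)
  then have "(\<lambda>x::real. 1 / x^2) absolutely_integrable_on {1..}"
    by (rule nonnegative_absolutely_integrable_1) auto
  then have "(\<lambda>x. (\<lambda>x::real. 1 / x^2) (-x)) absolutely_integrable_on {..-1}"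
    using has_absolute_integral_reflect_real[of "{..-1}" "{1..}" "\<lambda>x::real. 1 / x^2"
       "integral {1..} (\<lambda>x::real. 1 / x^2)"]
    by (force simp: image_iff)
  then show ?thesis by simp
qed

lemma rapid_decay_absolutely_integrable_on_atMost:
  assumes cont: "continuous_on UNIV h" and decay: "rapid_decay h"
  shows "h absolutely_integrable_on {..t}"
proof -
  obtain C where C: "\<And>u. u < 0 \<Longrightarrow> \<bar>u\<bar>^2 * \<bar>h u\<bar> \<le> C"
    using decay unfolding rapid_decay_def by blast
  have dominant: "(\<lambda>x::real. C * (1 / x^2)) integrable_on {..-1}"
    using inverse_square_absolutely_integrable_on_atMost set_lebesgue_integral_eq_integral(1)
      integrable_on_cmult_left by blast
  have "h \<in> borel_measurable (lebesgue_on {..-1})"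
    by (rule continuous_imp_measurable_on_sets_lebesgue) (auto intro: continuous_on_subset[OF cont])
  moreover have "norm (h x) \<le> C * (1 / x^2)" if "x \<in> {..-1}" for x
  proof -
    from that have "x^2 * \<bar>h x\<bar> \<le> C" "x^2 > 0" using C[of x] by auto
    then show ?thesis by (simp add: field_simps)
  qed
  ultimately have tail: "h absolutely_integrable_on {..-1}"
    by (intro measurable_bounded_by_integrable_imp_absolutely_integrable[OF _ _ dominant]) auto
  show ?thesis
  proof (cases "t \<le> -1")
    case True
    then show ?thesis by (intro set_integrable_subset[OF tail]) auto
  next
    case False
    have "h absolutely_integrable_on {-1..t}"
      by (rule absolutely_integrable_continuous_real) (auto intro: continuous_on_subset[OF cont])
    moreover have "{..t} = {..-1} \<union> {-1..t}" using False by auto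
    ultimately show ?thesis using absolutely_integrable_Un[OF tail] by metis
  qed
qed

lemma rapid_decay_integrable_on_atMost:
  "continuous_on UNIV h \<Longrightarrow> rapid_decay h \<Longrightarrow> h integrable_on {..t}"
  using rapid_decay_absolutely_integrable_on_atMost set_lebesgue_integral_eq_integral(1) by blast

lemma antideriv_has_real_derivative:
  assumes cont: "continuous_on UNIV h" and decay: "rapid_decay h"
  shows "(antideriv h has_real_derivative h t) (at t)"
proof -
  define a where "a = t - 1"
  define b where "b = t + 1"
  have split: "antideriv h x = integral {..a} h + integral {a..x} h" if "x \<in> {a<..<b}" for x
  proof -
    have "(h has_integral (integral {..a} h + integral {a..x} h)) ({..a} \<union> {a..x})"
    proof (rule has_integral_Un)
      show "(h has_integral integral {..a} h) {..a}"
        using rapid_decay_integrable_on_atMost[OF cont decay] by (rule integrable_integral)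
      show "(h has_integral integral {a..x} h) {a..x}"
        by (intro integrable_integral integrable_continuous_interval continuous_on_subset[OF cont])
          simp
      show "negligible ({..a} \<inter> {a..x})"
        by (rule negligible_subset[of "{a}"]) auto
    qed
    moreover have "{..a} \<union> {a..x} = {..x}" using that by auto
    ultimately show ?thesis unfolding antideriv_def by (simp add: integral_unique)
  qed
  have "((\<lambda>x. integral {a..x} h) has_real_derivative h t) (at t within {a..b})"
    by (rule integral_has_real_derivative) (auto simp: a_def b_def intro: continuous_on_subset[OF cont])
  moreover have "at t within {a..b} = at t"
    by (rule at_within_Icc_at) (auto simp: a_def b_def)
  ultimately have "((\<lambda>x. integral {..a} h + integral {a..x} h) has_real_derivative h t) (at t)"
    using DERIV_add[OF DERIV_const] by fastforce
  then show ?thesis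
    by (rule has_field_derivative_transform_within_open[of _ _ _ "{a<..<b}"])
       (auto simp: a_def b_def split)
qed

text \<open>For \<open>t < 0\<close> we have \<open>|t|\<^sup>k |\<integral>\<^bsub>-\<infinity>\<^esub>\<^sup>t h| \<le> \<integral>\<^bsub>-\<infinity>\<^esub>\<^sup>0 |u|\<^sup>k |h u| du\<close>, and the right-hand side
  is finite because \<open>|u|\<^sup>k |h u|\<close> decays rapidly as well.\<close>
lemma rapid_decay_antideriv:
  assumes cont: "continuous_on UNIV h" and decay: "rapid_decay h"
  shows "rapid_decay (antideriv h)"
  unfolding rapid_decay_def
proof
  fix k :: nat
  define \<phi> where "\<phi> = (\<lambda>u::real. \<bar>u\<bar>^k * \<bar>h u\<bar>)"
  have cont_\<phi>: "continuous_on UNIV \<phi>" unfolding \<phi>_def by (intro continuous_intros cont)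
  have "rapid_decay \<phi>" unfolding rapid_decay_def
  proof
    fix m
    from decay obtain C where C: "\<forall>t<0. \<bar>t\<bar>^(m+k) * \<bar>h t\<bar> \<le> C"
      unfolding rapid_decay_def by blast
    have "\<bar>t\<bar> ^ m * \<bar>\<phi> t\<bar> = \<bar>t\<bar>^(m+k) * \<bar>h t\<bar>" for t
      unfolding \<phi>_def power_add abs_mult by simp
    then show "\<exists>C. \<forall>t<0. \<bar>t\<bar> ^ m * \<bar>\<phi> t\<bar> \<le> C" using C by metis
  qed
  then have int_\<phi>: "\<phi> integrable_on {..t}" for t
    using rapid_decay_integrable_on_atMost[OF cont_\<phi>] by blast
  have "\<bar>t\<bar>^k * \<bar>antideriv h t\<bar> \<le> integral {..0} \<phi>" if "t < 0" for t
  proof -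
    have "\<bar>t\<bar>^k * \<bar>antideriv h t\<bar> = norm (integral {..t} (\<lambda>u. \<bar>t\<bar>^k * h u))"
      by (simp add: antideriv_def abs_mult)
    also have "\<dots> \<le> integral {..t} \<phi>"
    proof (rule integral_norm_bound_integral)
      show "(\<lambda>u. \<bar>t\<bar>^k * h u) integrable_on {..t}"
        by (rule integrable_on_mult_right[OF rapid_decay_integrable_on_atMost[OF cont decay]])
      fix u assume "u \<in> {..t}"
      then have "\<bar>t\<bar>^k \<le> \<bar>u\<bar>^k" using that by (intro power_mono) simp_all
      then show "norm (\<bar>t\<bar>^k * h u) \<le> \<phi> u"
        by (auto simp: \<phi>_def abs_mult intro: mult_right_mono)
    qed (rule int_\<phi>)
    also have "\<dots> \<le> integral {..0} \<phi>"
      by (rule integral_subset_le) (use that int_\<phi> in \<open>auto simp: \<phi>_def\<close>)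
    finally show ?thesis .
  qed
  then show "\<exists>C. \<forall>t<0. \<bar>t\<bar> ^ k * \<bar>antideriv h t\<bar> \<le> C" by blast
qed

lemma Sminus_iff:
  "f \<in> Sminus \<longleftrightarrow>
     (\<forall>j. (\<forall>x. (deriv ^^ j) f differentiable (at x)) \<and> rapid_decay ((deriv ^^ j) f))"
  unfolding Sminus_def smooth_fun_def rapid_decay_def by blast

text \<open>Working with \<open>has_real_derivative\<close> instead of \<open>deriv\<close> avoids the junk values \<open>deriv\<close> takes
  at points of non-differentiability.\<close>
lemma Sminus_derivative_sequence:
  assumes start: "F 0 = f"
    and has_deriv: "\<And>j t. (F j has_real_derivative F (Suc j) t) (at t)"
    and decay: "\<And>j. rapid_decay (F j)"
  shows "f \<in> Sminus" and "(deriv ^^ j) f = F j"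
proof -
  have eq: "(deriv ^^ j) f = F j" for j
  proof (induction j)
    case 0 then show ?case using start by simp
  next
    case (Suc j)
    have "deriv (F j) = F (Suc j)" using has_deriv by (intro ext DERIV_imp_deriv)
    then show ?case using Suc by simp
  qed
  then show "(deriv ^^ j) f = F j" .
  show "f \<in> Sminus" unfolding Sminus_iff eq
    using has_deriv decay real_differentiable_def by blast
qed

lemma Sminus_has_real_derivative_higher:
  assumes "f \<in> Sminus"
  shows "((deriv ^^ j) f has_real_derivative (deriv ^^ Suc j) f t) (at t)"
  using assms unfolding Sminus_iff by (simp add: DERIV_deriv_iff_real_differentiable)

lemma Sminus_has_real_derivative:
  "f \<in> Sminus \<Longrightarrow> (f has_real_derivative deriv f t) (at t)"
  using Sminus_has_real_derivative_higher[of f 0] by simp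

lemma Sminus_rapid_decay_higher: "f \<in> Sminus \<Longrightarrow> rapid_decay ((deriv ^^ j) f)"
  unfolding Sminus_iff by blast

lemma Sminus_rapid_decay: "f \<in> Sminus \<Longrightarrow> rapid_decay f"
  using Sminus_rapid_decay_higher[of f 0] by simp

lemma Sminus_continuous_on: "f \<in> Sminus \<Longrightarrow> continuous_on UNIV f"
  using Sminus_has_real_derivative by (meson DERIV_continuous continuous_at_imp_continuous_on)

lemma Sminus_deriv:
  assumes "f \<in> Sminus"
  shows "deriv f \<in> Sminus"
proof (rule Sminus_derivative_sequence(1)[where F="\<lambda>j. (deriv ^^ Suc j) f"])
  show "(deriv ^^ Suc 0) f = deriv f" by simp
  show "((deriv ^^ Suc j) f has_real_derivative (deriv ^^ Suc (Suc j)) f t) (at t)" for j t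
    by (rule Sminus_has_real_derivative_higher[OF assms])
  show "rapid_decay ((deriv ^^ Suc j) f)" for j
    by (rule Sminus_rapid_decay_higher[OF assms])
qed

lemma Sminus_add:
  assumes f: "f \<in> Sminus" and g: "g \<in> Sminus"
  shows "(\<lambda>t. f t + g t) \<in> Sminus"
    and "(deriv ^^ j) (\<lambda>t. f t + g t) = (\<lambda>t. (deriv ^^ j) f t + (deriv ^^ j) g t)"
proof -
  let ?F = "\<lambda>j t. (deriv ^^ j) f t + (deriv ^^ j) g t"
  have "?F 0 = (\<lambda>t. f t + g t)" by simp
  moreover have "(?F j has_real_derivative ?F (Suc j) t) (at t)" for j t
    using DERIV_add[OF Sminus_has_real_derivative_higher[OF f]
        Sminus_has_real_derivative_higher[OF g]] by simp
  moreover have "rapid_decay (?F j)" for j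
    by (intro rapid_decay_add Sminus_rapid_decay_higher f g)
  ultimately show "(\<lambda>t. f t + g t) \<in> Sminus" and "(deriv ^^ j) (\<lambda>t. f t + g t) = ?F j"
    by (rule Sminus_derivative_sequence)+
qed

lemma Sminus_cmult:
  assumes f: "f \<in> Sminus"
  shows "(\<lambda>t. c * f t) \<in> Sminus"
    and "(deriv ^^ j) (\<lambda>t. c * f t) = (\<lambda>t. c * (deriv ^^ j) f t)"
proof -
  let ?F = "\<lambda>j t. c * (deriv ^^ j) f t"
  have "?F 0 = (\<lambda>t. c * f t)" by simp
  moreover have "(?F j has_real_derivative ?F (Suc j) t) (at t)" for j t
    using DERIV_cmult[OF Sminus_has_real_derivative_higher[OF f]] by simp
  moreover have "rapid_decay (?F j)" for j
    by (intro rapid_decay_cmult Sminus_rapid_decay_higher f)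
  ultimately show "(\<lambda>t. c * f t) \<in> Sminus" and "(deriv ^^ j) (\<lambda>t. c * f t) = ?F j"
    by (rule Sminus_derivative_sequence)+
qed

text \<open>The \<open>j\<close>-th derivative of \<open>f g\<close> is a sum of products \<open>f\<^sup>(\<^sup>a\<^sup>) g\<^sup>(\<^sup>b\<^sup>)\<close>, indexed by a list of
  exponent pairs; keeping the terms unmerged spares us the binomial coefficients of Leibniz's rule.\<close>
fun leibniz_terms :: "nat \<Rightarrow> (nat \<times> nat) list" where
  "leibniz_terms 0 = [(0, 0)]"
| "leibniz_terms (Suc j) = concat (map (\<lambda>(a, b). [(Suc a, b), (a, Suc b)]) (leibniz_terms j))"

definition sum_deriv_products ::
    "(real \<Rightarrow> real) \<Rightarrow> (real \<Rightarrow> real) \<Rightarrow> (nat \<times> nat) list \<Rightarrow> real \<Rightarrow> real" where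
  "sum_deriv_products f g xs =
     (\<lambda>t. sum_list (map (\<lambda>(a, b). (deriv ^^ a) f t * (deriv ^^ b) g t) xs))"

lemma sum_deriv_products_has_real_derivative:
  assumes f: "f \<in> Sminus" and g: "g \<in> Sminus"
  shows "(sum_deriv_products f g xs has_real_derivative
           sum_deriv_products f g (concat (map (\<lambda>(a, b). [(Suc a, b), (a, Suc b)]) xs)) t) (at t)"
proof (induction xs)
  case Nil
  then show ?case by (simp add: sum_deriv_products_def)
next
  case (Cons ab xs)
  obtain a b where ab: "ab = (a, b)" by fastforce
  have "((\<lambda>t. (deriv ^^ a) f t * (deriv ^^ b) g t) has_real_derivative
          (deriv ^^ Suc a) f t * (deriv ^^ b) g t + (deriv ^^ Suc b) g t * (deriv ^^ a) f t) (at t)"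
    by (rule DERIV_mult[OF Sminus_has_real_derivative_higher[OF f]
          Sminus_has_real_derivative_higher[OF g]])
  from DERIV_add[OF this Cons.IH] show ?case
    by (simp add: ab sum_deriv_products_def algebra_simps)
qed

lemma rapid_decay_sum_deriv_products:
  assumes f: "f \<in> Sminus" and g: "g \<in> Sminus"
  shows "rapid_decay (sum_deriv_products f g xs)"
proof (induction xs)
  case Nil
  then show ?case by (auto simp: sum_deriv_products_def rapid_decay_def intro: exI[of _ 0])
next
  case (Cons ab xs)
  obtain a b where ab: "ab = (a, b)" by fastforce
  have "rapid_decay (\<lambda>t. (deriv ^^ a) f t * (deriv ^^ b) g t + sum_deriv_products f g xs t)"
    by (intro rapid_decay_add rapid_decay_mult Sminus_rapid_decay_higher f g Cons.IH)
  then show ?case by (simp add: ab sum_deriv_products_def)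
qed

lemma Sminus_mult:
  assumes f: "f \<in> Sminus" and g: "g \<in> Sminus"
  shows "(\<lambda>t. f t * g t) \<in> Sminus"
proof (rule Sminus_derivative_sequence(1)[where F="\<lambda>j. sum_deriv_products f g (leibniz_terms j)"])
  show "sum_deriv_products f g (leibniz_terms 0) = (\<lambda>t. f t * g t)"
    by (simp add: sum_deriv_products_def)
  show "(sum_deriv_products f g (leibniz_terms j) has_real_derivative
      sum_deriv_products f g (leibniz_terms (Suc j)) t) (at t)" for j t
    using sum_deriv_products_has_real_derivative[OF f g] by simp
  show "rapid_decay (sum_deriv_products f g (leibniz_terms j))" for j
    by (rule rapid_decay_sum_deriv_products[OF f g])
qed

lemma Sminus_antideriv:
  assumes f: "f \<in> Sminus"
  shows "antideriv f \<in> Sminus" and "deriv (antideriv f) = f"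
proof -
  let ?F = "\<lambda>j. case j of 0 \<Rightarrow> antideriv f | Suc i \<Rightarrow> (deriv ^^ i) f"
  have "?F 0 = antideriv f" by simp
  moreover have "(?F j has_real_derivative ?F (Suc j) t) (at t)" for j t
    using antideriv_has_real_derivative[OF Sminus_continuous_on[OF f] Sminus_rapid_decay[OF f]]
      Sminus_has_real_derivative_higher[OF f]
    by (cases j) simp_all
  moreover have "rapid_decay (?F j)" for j
    by (cases j) (auto intro: rapid_decay_antideriv Sminus_continuous_on
        Sminus_rapid_decay_higher Sminus_rapid_decay f)
  ultimately have "antideriv f \<in> Sminus" and "(deriv ^^ 1) (antideriv f) = ?F 1"
    by (rule Sminus_derivative_sequence)+
  then show "antideriv f \<in> Sminus" and "deriv (antideriv f) = f" by simp_all
qed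

lemma antideriv_add:
  assumes f: "f \<in> Sminus" and g: "g \<in> Sminus"
  shows "antideriv (\<lambda>t. f t + g t) = (\<lambda>t. antideriv f t + antideriv g t)"
  unfolding antideriv_def
  by (intro ext integral_add rapid_decay_integrable_on_atMost Sminus_continuous_on
      Sminus_rapid_decay f g)

lemma antideriv_cmult: "antideriv (\<lambda>t. c * f t) = (\<lambda>t. c * antideriv f t)"
  unfolding antideriv_def by simp

text \<open>The difference \<open>\<integral>\<^bsub>-\<infinity>\<^esub>\<^sup>t f' - f\<close> has derivative zero, hence is constant, and a rapidly
  decaying constant vanishes.\<close>
lemma antideriv_deriv:
  assumes f: "f \<in> Sminus"
  shows "antideriv (deriv f) = f"
proof -
  have df: "deriv f \<in> Sminus" by (rule Sminus_deriv[OF f])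
  define h where "h = (\<lambda>t. antideriv (deriv f) t + (-1) * f t)"
  have "(h has_real_derivative deriv f t + (-1) * deriv f t) (at t)" for t
    unfolding h_def
    by (intro DERIV_add DERIV_cmult antideriv_has_real_derivative Sminus_continuous_on
        Sminus_rapid_decay df Sminus_has_real_derivative f)
  then have "h = (\<lambda>_. h 0)" by (intro ext DERIV_isconst_all[of h]) simp
  moreover have "rapid_decay h"
    unfolding h_def by (intro Sminus_rapid_decay Sminus_add Sminus_cmult Sminus_antideriv df f)
  ultimately have "h x = 0" for x
    using rapid_decay_const_imp_zero[of "h 0"] by metis
  then show ?thesis unfolding h_def by (intro ext) (simp add: algebra_simps)
qed

lemma Sminus_antideriv_pow: "f \<in> Sminus \<Longrightarrow> (antideriv ^^ m) f \<in> Sminus"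
  by (induction m) (auto intro: Sminus_antideriv)

lemma Sminus_dk: "f \<in> Sminus \<Longrightarrow> dk k f \<in> Sminus"
proof -
  assume f: "f \<in> Sminus"
  have "(deriv ^^ m) f \<in> Sminus" for m by (induction m) (auto intro: Sminus_deriv f)
  then show ?thesis unfolding dk_def using Sminus_antideriv_pow[OF f] by auto
qed

lemma dk_add:
  assumes f: "f \<in> Sminus" and g: "g \<in> Sminus"
  shows "dk k (\<lambda>t. f t + g t) = (\<lambda>t. dk k f t + dk k g t)"
proof -
  have "(antideriv ^^ m) (\<lambda>t. f t + g t) = (\<lambda>t. (antideriv ^^ m) f t + (antideriv ^^ m) g t)" for m
    by (induction m) (simp_all add: antideriv_add Sminus_antideriv_pow f g)
  then show ?thesis unfolding dk_def using Sminus_add(2)[OF f g] by auto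
qed

lemma dk_cmult:
  assumes f: "f \<in> Sminus"
  shows "dk k (\<lambda>t. c * f t) = (\<lambda>t. c * dk k f t)"
proof -
  have "(antideriv ^^ m) (\<lambda>t. c * f t) = (\<lambda>t. c * (antideriv ^^ m) f t)" for m
    by (induction m) (simp_all add: antideriv_cmult)
  then show ?thesis unfolding dk_def using Sminus_cmult(2)[OF f] by auto
qed

lemma dk_neg: "k < 0 \<Longrightarrow> dk k f = antideriv (dk (k + 1) f)"
proof -
  assume "k < 0"
  then have "nat (- k) = Suc (nat (- (k + 1)))" by simp
  with \<open>k < 0\<close> show ?thesis unfolding dk_def by auto
qed

lemma deriv_dk:
  assumes f: "f \<in> Sminus"
  shows "deriv (dk k f) = dk (k + 1) f"
proof (cases "0 \<le> k")
  case True
  then have "nat (k + 1) = Suc (nat k)" by simp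
  with True show ?thesis unfolding dk_def by simp
next
  case False
  then show ?thesis using dk_neg Sminus_antideriv(2)[OF Sminus_dk[OF f]] by simp
qed

lemma dk_deriv:
  assumes f: "f \<in> Sminus"
  shows "dk k (deriv f) = dk (k + 1) f"
proof (cases "0 \<le> k")
  case True
  then have "nat (k + 1) = Suc (nat k)" by simp
  with True show ?thesis unfolding dk_def by (simp add: funpow_Suc_right del: funpow.simps)
next
  case False
  then have "k \<le> -1" by simp
  then show ?thesis
  proof (induction k rule: int_le_induct)
    case base
    then show ?case by (simp add: dk_neg dk_def antideriv_deriv f)
  next
    case (step k)
    then show ?case by (simp add: dk_neg[of "k - 1"] dk_neg[of k f])
  qed
qed

lemma Sminus_bracket: "g \<in> Sminus \<Longrightarrow> h \<in> Sminus \<Longrightarrow> bracket k s g h \<in> Sminus"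
  unfolding bracket_def by (intro Sminus_add Sminus_mult Sminus_cmult Sminus_deriv Sminus_dk)

lemma Sminus_gen: "f \<in> Sminus \<Longrightarrow> gen p k s f \<in> Sminus"
  by (induction p) (auto intro: Sminus_bracket)

lemma gen_eq_bracket:
  "gen p k s f = (let g = if p = 0 then f else gen (p - 1) k s f in bracket k s g g)"
  by (cases p) (simp_all add: Let_def)

lemma bilinear_on_bracket: "bilinear_on Sminus (bracket k s)"
proof -
  have deriv_add: "deriv (\<lambda>t. v t + w t) = (\<lambda>t. deriv v t + deriv w t)"
    if "v \<in> Sminus" "w \<in> Sminus" for v w
    using Sminus_add(2)[OF that, of 1] by simp
  have deriv_cmult: "deriv (\<lambda>t. c * v t) = (\<lambda>t. c * deriv v t)" if "v \<in> Sminus" for v c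
    using Sminus_cmult(2)[OF that, of 1] by simp
  have "\<forall>v\<in>Sminus. \<forall>w\<in>Sminus. bracket k s v w \<in> Sminus"
    by (blast intro: Sminus_bracket)
  then show ?thesis
    unfolding bilinear_on_def
    by (auto intro!: ext simp: bracket_def deriv_add deriv_cmult dk_add dk_cmult algebra_simps)
qed

lemma deriv_bracket_diagonal:
  assumes g: "g \<in> Sminus"
  shows "deriv (bracket k s g g) =
           (\<lambda>t. bracket (k + 1) s g g t + bracket (k - 1) s (deriv g) (deriv g) t)"
proof (rule ext, rule DERIV_imp_deriv)
  fix t
  have "(bracket k s g g has_real_derivative
      (deriv (deriv g) t * dk (k - 1) g t + deriv (dk (k - 1) g) t * deriv g t)
      + s * (deriv g t * dk k g t + deriv (dk k g) t * g t)) (at t)"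
    unfolding bracket_def
    by (intro DERIV_add DERIV_mult DERIV_cmult Sminus_has_real_derivative Sminus_deriv Sminus_dk g)
  moreover have "deriv (dk (k - 1) g) = dk k g" "deriv (dk k g) = dk (k + 1) g"
    "dk (k - 2) (deriv g) = dk (k - 1) g" "dk (k - 1) (deriv g) = dk k g"
    using deriv_dk[OF g, of "k - 1"] deriv_dk[OF g, of k]
      dk_deriv[OF g, of "k - 2"] dk_deriv[OF g, of "k - 1"] by simp_all
  ultimately show "(bracket k s g g has_real_derivative
      bracket (k + 1) s g g t + bracket (k - 1) s (deriv g) (deriv g) t) (at t)"
    by (simp add: bracket_def algebra_simps)
qed

theorem proposition3:
  fixes p :: nat and k :: int and s :: real
  assumes "s = 1 \<or> s = -1"
  shows "bilinear_on Sminus (bracket k s) \<and>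
    (\<forall>f\<in>Sminus.
       let g = (if p = 0 then f else gen (p - 1) k s f) in
         g \<in> Sminus \<and>
         gen p k s f = bracket k s g g \<and>
         deriv (bracket k s g g) =
           (\<lambda>t. bracket (k + 1) s g g t + bracket (k - 1) s (deriv g) (deriv g) t))"
proof (intro conjI ballI bilinear_on_bracket)
  fix f assume "f \<in> Sminus"
  define g where "g = (if p = 0 then f else gen (p - 1) k s f)"
  have "g \<in> Sminus" unfolding g_def using \<open>f \<in> Sminus\<close> Sminus_gen by simp
  moreover have "gen p k s f = bracket k s g g" unfolding g_def gen_eq_bracket[of p] Let_def ..
  ultimately show "let g = (if p = 0 then f else gen (p - 1) k s f) in
         g \<in> Sminus \<and>
         gen p k s f = bracket k s g g \<and>
         deriv (bracket k s g g) =
           (\<lambda>t. bracket (k + 1) s g g t + bracket (k - 1) s (deriv g) (deriv g) t)"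
    unfolding Let_def g_def[symmetric] using deriv_bracket_diagonal by blast
qed

end
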